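(* Let $\mathcal{P}$ be a set of mutually commuting Pauli operators on $n$ qubits, and let $r$ be the number of independent generators of $\mathcal{P}$ (the $\mathbb{F}_2$-rank of its tableau). Run the qubitwise diagonalization algorithm described in the context on $\mathcal{P}$, choosing at every stage $\alpha$ a nonzero null vector of symplectic weight at most $r^{(\alpha)}+1$ (i.e. one corresponding to a dependent set of at most $r^{(\alpha)}+1$ columns of the tableau). Then the total number of CNOT gate conjugations in the resulting diagonalizing circuit is at most $nr-\frac{r(r+1)}{2}$.
   Context: A Pauli operator on $m$ qubits is encoded, up to phase, by $u=(\boldsymbol{x},\boldsymbol{z})\in\mathbb{F}_2^{2m}$ via $P=\bigotimes_{j=1}^m X^{x_j}Z^{z_j}$. For a set of Pauli operators, the tableau $(\mathcal{X}\mid\mathcal{Z})$ is the binary matrix whose rows encode the operators. An operator is diagonal on qubit $j$ if its $j$-th tensor factor is $I$ or $Z$. The symplectic weight of $(\boldsymbol{v},\boldsymbol{w})\in\mathbb{F}_2^{2m}$ is $\omega(\boldsymbol{v},\boldsymbol{w})=|\{j: (v_j,w_j)\neq(0,0)\}|$. Qubitwise diagonalization algorithm. Input: a set of mutually commuting Pauli operators on $n$ qubits. At stage $\alpha$: discard the qubits on which all operators are already diagonal; let $n^{(\alpha)}$ be the number of remaining qubits (stop if $n^{(\alpha)}=0$); let $T^{(\alpha)}$ be an independent generating set of the operators restricted to the remaining qubits, of size $r^{(\alpha)}$, and let $M^{(\alpha)}=(\mathcal{X}^{(\alpha)}\mid\mathcal{Z}^{(\alpha)})$ be its $r^{(\alpha)}\times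 2n^{(\alpha)}$ tableau. Choose a nonzero $(\boldsymbol{v},\boldsymbol{w})$ with $M^{(\alpha)}(\boldsymbol{v};\boldsymbol{w})=0$ over $\mathbb{F}_2$, and a qubit $i$ with $(v_i,w_i)\neq(0,0)$. Step 1: for each qubit $j$, if $v_j=0,w_j=1$ conjugate by $\mathrm{H}(j)$; if $v_j=w_j=1$ conjugate by $\mathrm{S}(j)$ then $\mathrm{H}(j)$. Step 2: for each $j\neq i$ with $(v_j,w_j)\neq(0,0)$, conjugate by $\mathrm{CNOT}(j,i)$. After this all operators are diagonal on qubit $i$; then proceed to stage $\alpha+1$. The output circuit is the composition of all gates used. *)

theory Defs
  imports Complex_Main "HOL-Library.Z2"
begin

text \<open>A Pauli operator (up to phase) is encoded by (x, z), with x, z : nat => F_2;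
  qubit j corresponds to coordinate j (qubits of an n-qubit system are 0..<n).\<close>
type_synonym pauli = "(nat \<Rightarrow> bit) \<times> (nat \<Rightarrow> bit)"

definition supported_on :: "nat set \<Rightarrow> pauli \<Rightarrow> bool" where
  "supported_on Q u \<longleftrightarrow> (\<forall>j. j \<notin> Q \<longrightarrow> fst u j = 0 \<and> snd u j = 0)"

text \<open>Symplectic form on n qubits; operators commute iff it vanishes.\<close>
definition symp :: "nat \<Rightarrow> pauli \<Rightarrow> pauli \<Rightarrow> bit" where
  "symp n u u' = (\<Sum>j<n. fst u j * snd u' j + snd u j * fst u' j)"

text \<open>F_2-linear algebra: linear combinations over F_2 are subset sums.\<close>
definition vsum :: "pauli set \<Rightarrow> pauli" where
  "vsum A = (\<lambda>j. \<Sum>u\<in>A. fst u j, \<lambda>j. \<Sum>u\<in>A. snd u j)"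

definition f2_span :: "pauli set \<Rightarrow> pauli set" where
  "f2_span S = {vsum A | A. finite A \<and> A \<subseteq> S}"

definition f2_indep :: "pauli set \<Rightarrow> bool" where
  "f2_indep T \<longleftrightarrow> finite T \<and> (\<forall>A. A \<subseteq> T \<and> A \<noteq> {} \<longrightarrow> vsum A \<noteq> (\<lambda>_. 0, \<lambda>_. 0))"

definition indep_gen_set :: "pauli set \<Rightarrow> pauli set \<Rightarrow> bool" where
  "indep_gen_set T S \<longleftrightarrow> f2_indep T \<and> f2_span T = f2_span S"

definition restrict_to :: "nat set \<Rightarrow> pauli \<Rightarrow> pauli" where
  "restrict_to Q u = (\<lambda>j. if j \<in> Q then fst u j else 0, \<lambda>j. if j \<in> Q then snd u j else 0)"

text \<open>Qubits on which some operator is not diagonal (i.e. has an X-component).\<close>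
definition remaining :: "pauli set \<Rightarrow> nat set" where
  "remaining P = {j. \<exists>u\<in>P. fst u j \<noteq> 0}"

definition symp_weight :: "nat set \<Rightarrow> pauli \<Rightarrow> nat" where
  "symp_weight Q vw = card {j\<in>Q. fst vw j \<noteq> 0 \<or> snd vw j \<noteq> 0}"

definition tableau_null :: "nat set \<Rightarrow> pauli set \<Rightarrow> pauli \<Rightarrow> bool" where
  "tableau_null Q T vw \<longleftrightarrow>
     (\<forall>t\<in>T. (\<Sum>j\<in>Q. fst t j * fst vw j + snd t j * snd vw j) = 0)"

datatype gate = Had nat | Phs nat | CNOT nat nat

text \<open>Conjugation action of gates on Pauli operators (up to phase).
  CNOT c t: X_c -> X_c X_t, Z_t -> Z_c Z_t.\<close>
fun conj_gate :: "gate \<Rightarrow> pauli \<Rightarrow> pauli" where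
  "conj_gate (Had j) (x, z) = (x(j := z j), z(j := x j))"
| "conj_gate (Phs j) (x, z) = (x, z(j := z j + x j))"
| "conj_gate (CNOT c t) (x, z) = (x(t := x t + x c), z(c := z c + z t))"

definition conj_circ :: "gate list \<Rightarrow> pauli \<Rightarrow> pauli" where
  "conj_circ C u = fold conj_gate C u"

definition step1_gates :: "nat set \<Rightarrow> pauli \<Rightarrow> gate list" where
  "step1_gates Q vw = concat (map (\<lambda>j.
      if fst vw j = 0 \<and> snd vw j = 1 then [Had j]
      else if fst vw j = 1 \<and> snd vw j = 1 then [Phs j, Had j] else [])
    (sorted_list_of_set Q))"

definition step2_gates :: "nat set \<Rightarrow> pauli \<Rightarrow> nat \<Rightarrow> gate list" where
  "step2_gates Q vw i = map (\<lambda>j. CNOT j i)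
     (filter (\<lambda>j. j \<noteq> i \<and> (fst vw j \<noteq> 0 \<or> snd vw j \<noteq> 0)) (sorted_list_of_set Q))"

definition stage_circuit :: "nat set \<Rightarrow> pauli \<Rightarrow> nat \<Rightarrow> gate list" where
  "stage_circuit Q vw i = step1_gates Q vw @ step2_gates Q vw i"

inductive qwd_run :: "pauli set \<Rightarrow> gate list \<Rightarrow> bool" where
  stop: "remaining P = {} \<Longrightarrow> qwd_run P []"
| stage: "\<lbrakk> Q = remaining P; Q \<noteq> {};
            \<forall>t\<in>T. supported_on Q t;
            indep_gen_set T (restrict_to Q ` P);
            supported_on Q vw; vw \<noteq> (\<lambda>_. 0, \<lambda>_. 0);
            tableau_null Q T vw;
            symp_weight Q vw \<le> card T + 1;
            i \<in> Q; fst vw i \<noteq> 0 \<or> snd vw i \<noteq> 0;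
            qwd_run (conj_circ (stage_circuit Q vw i) ` P) C \<rbrakk>
         \<Longrightarrow> qwd_run P (stage_circuit Q vw i @ C)"

definition cnot_count :: "gate list \<Rightarrow> nat" where
  "cnot_count C = length (filter (\<lambda>g. case g of CNOT _ _ \<Rightarrow> True | _ \<Rightarrow> False) C)"

end

(* Stage alpha spends symp_weight - 1 CNOTs, which is at most r^(alpha) and at most
   n^(alpha) - 1. Restriction to the remaining qubits and conjugation by gates are F_2-linear,
   so every tableau of the run lies in the image of the span of the original r generators and
   r^(alpha) <= r. Step 1 turns the X-part of every operator on qubit i into its pairing with
   the null vector, which vanishes, so each stage removes at least qubit i from the remaining
   qubits and adds none. Summing min(r, k) over k < n and using r <= n (the circuit is an
   injective linear map ending in diagonal operators) gives nr - r(r+1)/2. *)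

theory Submission
  imports Defs "HOL-Library.Function_Algebras" "HOL-Library.Product_Plus"
begin

(* Keep + and * on bit as field operations instead of rewriting them to XOR and AND. *)
declare add_bit_eq_xor [simp del] mult_bit_eq_and [simp del]

lemma bit_add_self [simp]: "b + b = (0::bit)"
  by (cases b) simp_all

lemma sum_apply: "(\<Sum>x\<in>A. f x) j = (\<Sum>x\<in>A. f x j)"
  by (induct A rule: infinite_finite_induct) auto

lemma pauli_add_self [simp]: "u + u = (0::pauli)"
  by (simp add: prod_eq_iff fun_eq_iff)

lemma pauli_zero_eq: "(\<lambda>_. 0, \<lambda>_. 0) = (0::pauli)"
  by (simp add: zero_prod_def zero_fun_def)

lemma vsum_eq_sum: "vsum A = \<Sum>A"
  by (simp add: vsum_def prod_eq_iff fun_eq_iff fst_sum snd_sum sum_apply)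

lemma f2_span_eq: "f2_span S = {\<Sum>A | A. finite A \<and> A \<subseteq> S}"
  by (simp add: f2_span_def vsum_eq_sum)

lemma f2_indep_iff: "f2_indep T \<longleftrightarrow> finite T \<and> (\<forall>A\<subseteq>T. A \<noteq> {} \<longrightarrow> \<Sum>A \<noteq> 0)"
  by (auto simp: f2_indep_def vsum_eq_sum pauli_zero_eq)

lemma sum_symdiff:
  fixes f :: "'a \<Rightarrow> 'b::comm_monoid_add"
  assumes char2: "\<And>y::'b. y + y = 0" and "finite A" "finite B"
  shows "sum f A + sum f B = sum f (sym_diff A B)"
proof -
  have A: "sum f A = sum f (A \<inter> B) + sum f (A - B)"
    using \<open>finite A\<close> by (rule sum.Int_Diff)
  have B: "sum f B = sum f (A \<inter> B) + sum f (B - A)"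
    using sum.Int_Diff[OF \<open>finite B\<close>, of f A] by (simp add: Int_commute)
  have "sum f (sym_diff A B) = sum f (A - B) + sum f (B - A)"
    using assms by (intro sum.union_disjoint) auto
  moreover have "(c + a) + (c + b) = (c + c) + (a + b)" for a b c :: 'b
    by (simp add: ac_simps)
  ultimately show ?thesis
    unfolding A B by (simp add: char2)
qed

lemma zero_in_f2_span: "0 \<in> f2_span S"
  unfolding f2_span_eq by (rule CollectI, rule exI[of _ "{}"]) auto

lemma f2_span_base: "S \<subseteq> f2_span S"
  unfolding f2_span_eq by (auto intro!: exI[of _ "{_}"])

lemma f2_span_add:
  assumes "x \<in> f2_span S" "y \<in> f2_span S"
  shows "x + y \<in> f2_span S"
proof -
  obtain A B where "finite A" "A \<subseteq> S" "x = \<Sum>A" "finite B" "B \<subseteq> S" "y = \<Sum>B"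
    using assms unfolding f2_span_eq by blast
  then show ?thesis
    unfolding f2_span_eq
    by (intro CollectI exI[of _ "sym_diff A B"]) (auto simp: sum_symdiff)
qed

lemma f2_span_sum:
  "finite A \<Longrightarrow> (\<And>a. a \<in> A \<Longrightarrow> g a \<in> f2_span S) \<Longrightarrow> sum g A \<in> f2_span S"
  by (induction A rule: finite_induct) (auto simp: zero_in_f2_span f2_span_add)

lemma f2_span_subset:
  assumes "A \<subseteq> f2_span S"
  shows "f2_span A \<subseteq> f2_span S"
proof
  fix y assume "y \<in> f2_span A"
  then obtain B where "finite B" "B \<subseteq> A" "y = \<Sum>B"
    unfolding f2_span_eq by blast
  then show "y \<in> f2_span S"
    using assms by (metis f2_span_sum subsetD)
qed

lemma additive_image_f2_span:
  assumes "additive f"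
  shows "f ` f2_span S \<subseteq> f2_span (f ` S)"
proof
  fix y assume "y \<in> f ` f2_span S"
  then obtain A where A: "finite A" "A \<subseteq> S" "y = f (\<Sum>A)"
    unfolding f2_span_eq by blast
  have "y = (\<Sum>a\<in>A. f a)"
    using A(3) additive.sum[OF assms] by simp
  also have "\<dots> \<in> f2_span (f ` S)"
  proof (rule f2_span_sum)
    fix a assume "a \<in> A"
    then have "f a \<in> f ` S"
      using A(2) by (meson imageI subsetD)
    then show "f a \<in> f2_span (f ` S)"
      by (rule subsetD[OF f2_span_base])
  qed (rule A(1))
  finally show "y \<in> f2_span (f ` S)" .
qed

lemma additive_vanishes_on_f2_span:
  fixes f :: "pauli \<Rightarrow> 'b::ab_group_add"
  assumes "additive f" "\<forall>t\<in>T. f t = 0" "u \<in> f2_span T"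
  shows "f u = 0"
proof -
  obtain A where "A \<subseteq> T" "u = \<Sum>A"
    using assms(3) unfolding f2_span_eq by blast
  then have "f u = (\<Sum>a\<in>A. f a)"
    using additive.sum[OF assms(1), where g = "\<lambda>x. x"] by simp
  also have "\<dots> = 0"
    using \<open>A \<subseteq> T\<close> assms(2) by (intro sum.neutral) blast
  finally show ?thesis .
qed

lemma f2_indep_image:
  assumes "additive f" "inj f" "f2_indep T"
  shows "f2_indep (f ` T)"
  unfolding f2_indep_iff
proof (intro conjI allI impI)
  show "finite (f ` T)"
    using assms(3) by (simp add: f2_indep_iff)
  fix B assume B: "B \<subseteq> f ` T" "B \<noteq> {}"
  define A where "A = T \<inter> f -` B"
  have "B = f ` A"
    using B unfolding A_def by auto
  then have "A \<subseteq> T" "A \<noteq> {}"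
    using B unfolding A_def by auto
  then have "\<Sum>A \<noteq> 0"
    using assms(3) by (simp add: f2_indep_iff)
  then have "f (\<Sum>A) \<noteq> 0"
    using assms(2) additive.zero[OF assms(1)] by (metis injD)
  moreover have "f (\<Sum>A) = \<Sum>B"
    using \<open>B = f ` A\<close> additive.sum[OF assms(1), where g = "\<lambda>x. x"]
      sum.reindex[OF inj_on_subset[OF assms(2)], where g = "\<lambda>x. x"]
    by simp
  ultimately show "\<Sum>B \<noteq> 0" by simp
qed

text \<open>An independent set T has 2^|T| distinct subset sums, all in the span of S, which
  has at most 2^|S| elements.\<close>
lemma card_le_if_f2_indep_subset_span:
  assumes "f2_indep T" "finite S" "T \<subseteq> f2_span S"
  shows "card T \<le> card S"
proof -
  have "finite T" and indep: "\<And>A. A \<subseteq> T \<Longrightarrow> A \<noteq> {} \<Longrightarrow> \<Sum>A \<noteq> 0"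
    using assms(1) by (simp_all add: f2_indep_iff)
  have "inj_on Sum (Pow T)"
  proof (rule inj_onI)
    fix A B assume AB: "A \<in> Pow T" "B \<in> Pow T" "\<Sum>A = \<Sum>B"
    then have "finite A" "finite B"
      using \<open>finite T\<close> by (auto intro: finite_subset)
    then have "\<Sum>(sym_diff A B) = 0"
      using AB(3) sum_symdiff[where f = "\<lambda>x. x", of A B] by simp
    moreover have "sym_diff A B \<subseteq> T"
      using AB(1,2) by blast
    ultimately have "sym_diff A B = {}"
      using indep by blast
    then show "A = B" by blast
  qed
  have "Sum ` Pow T \<subseteq> f2_span T"
    using \<open>finite T\<close> unfolding f2_span_eq by (auto intro: finite_subset)
  also have "\<dots> \<subseteq> f2_span S"
    using assms(3) by (rule f2_span_subset)
  also have "\<dots> \<subseteq> Sum ` Pow S"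
    unfolding f2_span_eq by blast
  finally have sums: "Sum ` Pow T \<subseteq> Sum ` Pow S" .
  have "(2::nat) ^ card T = card (Sum ` Pow T)"
    using card_image[OF \<open>inj_on Sum (Pow T)\<close>] \<open>finite T\<close> by (simp add: card_Pow)
  also have "\<dots> \<le> card (Sum ` Pow S)"
    using assms(2) sums by (intro card_mono) auto
  also have "\<dots> \<le> card (Pow S)"
    using assms(2) by (intro card_image_le) auto
  finally have "(2::nat) ^ card T \<le> 2 ^ card S"
    using assms(2) by (simp add: card_Pow)
  then show ?thesis by simp
qed

lemma card_indep_gen_set_le:
  assumes "additive f" "indep_gen_set T (f ` P)" "P \<subseteq> f2_span S" "finite S"
  shows "card T \<le> card S"
proof -
  have "f ` P \<subseteq> f2_span (f ` S)"
    using assms(3) additive_image_f2_span[OF assms(1), of S] by blast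
  then have "T \<subseteq> f2_span (f ` S)"
    using assms(2) f2_span_base[of T] f2_span_subset unfolding indep_gen_set_def by blast
  then have "card T \<le> card (f ` S)"
    using assms(2,4) by (intro card_le_if_f2_indep_subset_span) (auto simp: indep_gen_set_def)
  also have "\<dots> \<le> card S"
    using assms(4) by (rule card_image_le)
  finally show ?thesis .
qed

lemma conj_circ_Nil [simp]: "conj_circ [] u = u"
  by (simp add: conj_circ_def)

lemma conj_circ_Cons [simp]: "conj_circ (g # C) u = conj_circ C (conj_gate g u)"
  by (simp add: conj_circ_def)

lemma conj_circ_append [simp]: "conj_circ (C @ D) u = conj_circ D (conj_circ C u)"
  by (simp add: conj_circ_def)

lemma additive_conj_gate: "additive (conj_gate g)"
proof
  show "conj_gate g (u + v) = conj_gate g u + conj_gate g v" for u v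
    by (cases u; cases v; cases g) (simp_all add: fun_eq_iff ac_simps)
qed

lemma additive_conj_circ: "additive (conj_circ C)"
proof
  show "conj_circ C (u + v) = conj_circ C u + conj_circ C v" for u v
    by (induction C arbitrary: u v) (simp_all add: additive.add[OF additive_conj_gate])
qed

lemma additive_restrict_to: "additive (restrict_to Q)"
  by unfold_locales (simp add: restrict_to_def fun_eq_iff)

fun proper_gate :: "gate \<Rightarrow> bool" where
  "proper_gate (CNOT c t) \<longleftrightarrow> c \<noteq> t"
| "proper_gate _ \<longleftrightarrow> True"

lemma conj_gate_involution: "proper_gate g \<Longrightarrow> conj_gate g (conj_gate g u) = u"
  by (cases u; cases g) (auto simp: fun_eq_iff add.assoc)

lemma inj_conj_circ: "\<forall>g\<in>set C. proper_gate g \<Longrightarrow> inj (conj_circ C)"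
proof (induction C)
  case (Cons g C)
  then have "inj (conj_circ C \<circ> conj_gate g)"
    by (metis conj_gate_involution inj_compose injI list.set_intros)
  then show ?case
    by (simp add: comp_def)
qed (simp add: inj_def)

fun acts_on :: "nat set \<Rightarrow> gate \<Rightarrow> bool" where
  "acts_on N (Had j) \<longleftrightarrow> j \<in> N"
| "acts_on N (Phs j) \<longleftrightarrow> j \<in> N"
| "acts_on N (CNOT c t) \<longleftrightarrow> c \<in> N \<and> t \<in> N"

lemma supported_on_conj_circ:
  "supported_on N u \<Longrightarrow> \<forall>g\<in>set C. acts_on N g \<Longrightarrow> supported_on N (conj_circ C u)"
proof (induction C arbitrary: u)
  case (Cons g C)
  have "supported_on N (conj_gate g u)"
    using Cons.prems by (cases u; cases g) (auto simp: supported_on_def)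
  then show ?case
    using Cons by simp
qed simp

lemma stage_circuit_gates:
  assumes "i \<in> Q"
  shows "\<forall>g\<in>set (stage_circuit Q vw i). acts_on Q g \<and> proper_gate g"
  using assms by (cases "finite Q")
    (auto simp: stage_circuit_def step1_gates_def step2_gates_def split: if_splits)

lemma cnot_count_append: "cnot_count (C @ D) = cnot_count C + cnot_count D"
  by (simp add: cnot_count_def)

lemma cnot_count_stage_circuit:
  assumes "finite Q" "i \<in> Q" "fst vw i \<noteq> 0 \<or> snd vw i \<noteq> 0"
  shows "cnot_count (stage_circuit Q vw i) + 1 = symp_weight Q vw"
proof -
  define supp where "supp = {j\<in>Q. fst vw j \<noteq> 0 \<or> snd vw j \<noteq> 0}"
  have "cnot_count (step1_gates Q vw) = 0"
    by (auto simp: cnot_count_def step1_gates_def filter_empty_conv)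
  moreover have "cnot_count (step2_gates Q vw i) = card (supp - {i})"
  proof -
    let ?L = "filter (\<lambda>j. j \<noteq> i \<and> (fst vw j \<noteq> 0 \<or> snd vw j \<noteq> 0)) (sorted_list_of_set Q)"
    have "set ?L = supp - {i}"
      using assms(1) by (auto simp: supp_def)
    moreover have "length ?L = card (set ?L)"
      by (rule distinct_card[symmetric]) simp
    ultimately have "length ?L = card (supp - {i})"
      by simp
    then show ?thesis
      by (simp add: cnot_count_def step2_gates_def filter_map comp_def)
  qed
  moreover have "Suc (card (supp - {i})) = card supp"
    using assms by (intro card_Suc_Diff1) (auto simp: supp_def)
  moreover have "symp_weight Q vw = card supp"
    by (simp add: symp_weight_def supp_def)
  ultimately show ?thesis
    by (simp add: stage_circuit_def cnot_count_append)
qed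

definition qubit_gates :: "pauli \<Rightarrow> nat \<Rightarrow> gate list" where
  "qubit_gates vw j =
     (if fst vw j = 0 \<and> snd vw j = 1 then [Had j]
      else if fst vw j = 1 \<and> snd vw j = 1 then [Phs j, Had j] else [])"

lemma step1_gates_eq: "step1_gates Q vw = concat (map (qubit_gates vw) (sorted_list_of_set Q))"
  by (simp add: step1_gates_def qubit_gates_def[abs_def])

lemma conj_circ_qubit_gates:
  "conj_circ (qubit_gates vw j) (x, z) =
     (x(j := if snd vw j = 1 then x j * fst vw j + z j else x j),
      z(j := if snd vw j = 1 then x j else z j))"
  by (cases "fst vw j"; cases "snd vw j") (simp_all add: qubit_gates_def fun_eq_iff add.commute)

lemma conj_circ_step1:
  assumes "distinct L"
  shows "conj_circ (concat (map (qubit_gates vw) L)) (x, z) =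
    (\<lambda>k. if k \<in> set L \<and> snd vw k = 1 then x k * fst vw k + z k else x k,
     \<lambda>k. if k \<in> set L \<and> snd vw k = 1 then x k else z k)"
  using assms by (induction L arbitrary: x z) (auto simp: conj_circ_qubit_gates fun_eq_iff)

lemma fst_conj_circ_cnots:
  assumes "distinct L" "i \<notin> set L"
  shows "fst (conj_circ (map (\<lambda>j. CNOT j i) L) u) = (fst u)(i := fst u i + (\<Sum>j\<in>set L. fst u j))"
  using assms
proof (induction L arbitrary: u)
  case (Cons a L)
  let ?u = "conj_gate (CNOT a i) u"
  have "fst ?u = (fst u)(i := fst u i + fst u a)"
    by (cases u) simp
  then show ?case
    using Cons by (auto simp: add.assoc fun_eq_iff intro!: sum.cong)
qed simp

definition tableau_pairing :: "nat set \<Rightarrow> pauli \<Rightarrow> pauli \<Rightarrow> bit" where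
  "tableau_pairing Q vw u = (\<Sum>j\<in>Q. fst u j * fst vw j + snd u j * snd vw j)"

lemma tableau_null_iff: "tableau_null Q T vw \<longleftrightarrow> (\<forall>t\<in>T. tableau_pairing Q vw t = 0)"
  by (simp add: tableau_null_def tableau_pairing_def)

lemma additive_tableau_pairing: "additive (tableau_pairing Q vw)"
  by unfold_locales (simp add: tableau_pairing_def sum.distrib algebra_simps)

lemma tableau_pairing_restrict_to: "tableau_pairing Q vw (restrict_to Q u) = tableau_pairing Q vw u"
  by (simp add: tableau_pairing_def restrict_to_def)

text \<open>Step 1 turns the X-part of u on each qubit j of the support of (v, w) into
  x_j v_j + z_j w_j, and step 2 adds these up on qubit i.\<close>
lemma fst_conj_circ_stage_circuit:
  assumes "finite Q" "i \<in> Q" "fst vw i \<noteq> 0 \<or> snd vw i \<noteq> 0"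
  shows "fst (conj_circ (stage_circuit Q vw i) u) i = tableau_pairing Q vw u"
    and "k \<notin> Q \<Longrightarrow> fst (conj_circ (stage_circuit Q vw i) u) k = fst u k"
proof -
  define x1 where
    "x1 k = (if k \<in> Q \<and> snd vw k = 1 then fst u k * fst vw k + snd u k else fst u k)" for k
  define supp where "supp = {j\<in>Q. fst vw j \<noteq> 0 \<or> snd vw j \<noteq> 0}"
  define L where "L = filter (\<lambda>j. j \<noteq> i \<and> (fst vw j \<noteq> 0 \<or> snd vw j \<noteq> 0)) (sorted_list_of_set Q)"
  have L: "distinct L" "i \<notin> set L" "set L = supp - {i}"
    using assms(1) by (auto simp: L_def supp_def)
  have "step2_gates Q vw i = map (\<lambda>j. CNOT j i) L"
    by (simp add: step2_gates_def L_def)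
  moreover have "fst (conj_circ (step1_gates Q vw) u) = x1"
    using assms(1) conj_circ_step1[of _ vw "fst u" "snd u"]
    by (simp add: step1_gates_eq x1_def fun_eq_iff)
  ultimately have x: "fst (conj_circ (stage_circuit Q vw i) u) = x1(i := x1 i + (\<Sum>j\<in>supp - {i}. x1 j))"
    using fst_conj_circ_cnots[OF L(1,2)] L(3) by (simp add: stage_circuit_def)
  show "k \<notin> Q \<Longrightarrow> fst (conj_circ (stage_circuit Q vw i) u) k = fst u k"
    using assms(2) by (auto simp: x x1_def)
  have "finite supp" "i \<in> supp"
    using assms by (simp_all add: supp_def)
  then have "x1 i + (\<Sum>j\<in>supp - {i}. x1 j) = (\<Sum>j\<in>supp. x1 j)"
    by (simp add: sum.remove)
  also have "\<dots> = (\<Sum>j\<in>supp. fst u j * fst vw j + snd u j * snd vw j)"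
    by (intro sum.cong) (auto simp: supp_def x1_def)
  also have "\<dots> = tableau_pairing Q vw u"
    unfolding tableau_pairing_def using assms(1)
    by (intro sum.mono_neutral_left) (auto simp: supp_def)
  finally show "fst (conj_circ (stage_circuit Q vw i) u) i = tableau_pairing Q vw u"
    by (simp add: x)
qed

lemma remaining_stage_circuit:
  assumes "Q = remaining P" "finite Q" "indep_gen_set T (restrict_to Q ` P)"
    and "tableau_null Q T vw" "i \<in> Q" "fst vw i \<noteq> 0 \<or> snd vw i \<noteq> 0"
  shows "remaining (conj_circ (stage_circuit Q vw i) ` P) \<subseteq> Q - {i}"
proof
  fix k assume "k \<in> remaining (conj_circ (stage_circuit Q vw i) ` P)"
  then obtain u where "u \<in> P" and nonzero: "fst (conj_circ (stage_circuit Q vw i) u) k \<noteq> 0"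
    by (auto simp: remaining_def)
  have "restrict_to Q u \<in> f2_span T"
    using assms(3) \<open>u \<in> P\<close> f2_span_base[of "restrict_to Q ` P"]
    unfolding indep_gen_set_def by blast
  then have "tableau_pairing Q vw (restrict_to Q u) = 0"
    using additive_vanishes_on_f2_span[OF additive_tableau_pairing] assms(4)
    by (simp add: tableau_null_iff)
  then have "fst (conj_circ (stage_circuit Q vw i) u) i = 0"
    by (simp add: fst_conj_circ_stage_circuit(1)[OF assms(2,5,6)] tableau_pairing_restrict_to)
  moreover have "fst (conj_circ (stage_circuit Q vw i) u) k = 0" if "k \<notin> Q"
    using that assms(1) \<open>u \<in> P\<close> fst_conj_circ_stage_circuit(2)[OF assms(2,5,6)]
    by (auto simp: remaining_def)
  ultimately show "k \<in> Q - {i}"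
    using nonzero by blast
qed

definition cnot_bound :: "nat \<Rightarrow> nat \<Rightarrow> nat" where
  "cnot_bound m r = (\<Sum>k<m. min r k)"

lemma cnot_bound_Suc: "cnot_bound (Suc m) r = cnot_bound m r + min r m"
  by (simp add: cnot_bound_def)

lemma cnot_bound_mono: "m \<le> m' \<Longrightarrow> r \<le> r' \<Longrightarrow> cnot_bound m r \<le> cnot_bound m' r'"
  unfolding cnot_bound_def
  by (rule order_trans[OF sum_mono sum_mono2]) auto

lemma cnot_bound_closed_form:
  assumes "r \<le> n"
  shows "2 * cnot_bound n r + r * (r + 1) = 2 * n * r"
  using assms
proof (induction n rule: dec_induct)
  case base
  have "cnot_bound r r = (\<Sum>k<r. k)"
    unfolding cnot_bound_def by (intro sum.cong) auto
  moreover have "2 * (\<Sum>k<r. k) = r * (r - 1)"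
    by (induction r) (auto simp: algebra_simps)
  ultimately show ?case
    by (cases r) (simp_all add: algebra_simps)
next
  case (step m)
  then show ?case
    by (simp add: cnot_bound_Suc algebra_simps)
qed

lemma remaining_subset: "\<forall>u\<in>P. supported_on N u \<Longrightarrow> remaining P \<subseteq> N"
  unfolding remaining_def supported_on_def by blast

lemma cnot_count_le_cnot_bound:
  assumes "qwd_run P C" "finite (remaining P)" "finite S" "P \<subseteq> f2_span S"
  shows "cnot_count C \<le> cnot_bound (card (remaining P)) (card S)"
  using assms
proof (induction arbitrary: S rule: qwd_run.induct)
  case (stop P)
  then show ?case
    by (simp add: cnot_count_def)
next
  case (stage Q P T vw i C)
  let ?F = "conj_circ (stage_circuit Q vw i)"
  have "finite Q"
    using stage.hyps(1) stage.prems(1) by simp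
  have remaining_F: "remaining (?F ` P) \<subseteq> Q - {i}"
    by (rule remaining_stage_circuit[OF stage.hyps(1) \<open>finite Q\<close> stage.hyps(4,7,9,10)])
  then have "finite (remaining (?F ` P))"
    using \<open>finite Q\<close> by (simp add: finite_subset)
  moreover have "?F ` P \<subseteq> f2_span (?F ` S)"
    using stage.prems(3) additive_image_f2_span[OF additive_conj_circ] by blast
  ultimately have "cnot_count C \<le> cnot_bound (card (remaining (?F ` P))) (card (?F ` S))"
    using stage.prems(2) by (intro stage.IH) simp_all
  also have "\<dots> \<le> cnot_bound (card Q - 1) (card (?F ` S))"
    using card_mono[OF _ remaining_F] \<open>finite Q\<close> stage.hyps(9) by (intro cnot_bound_mono) simp_all
  also have "\<dots> \<le> cnot_bound (card Q - 1) (card S)"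
    using stage.prems(2) by (intro cnot_bound_mono card_image_le) auto
  finally have rest: "cnot_count C \<le> cnot_bound (card Q - 1) (card S)" .
  have "card T \<le> card S"
    using stage.hyps(4) stage.prems(2,3) by (intro card_indep_gen_set_le[OF additive_restrict_to])
  moreover have "symp_weight Q vw \<le> card Q"
    unfolding symp_weight_def using \<open>finite Q\<close> by (intro card_mono) auto
  ultimately have "cnot_count (stage_circuit Q vw i) \<le> min (card S) (card Q - 1)"
    using cnot_count_stage_circuit[OF \<open>finite Q\<close> stage.hyps(9,10)] stage.hyps(8) by simp
  then have "cnot_count (stage_circuit Q vw i @ C) \<le> min (card S) (card Q - 1) + cnot_bound (card Q - 1) (card S)"
    unfolding cnot_count_append using rest by (rule add_mono)
  also have "\<dots> = cnot_bound (card Q) (card S)"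
    using \<open>finite Q\<close> stage.hyps(9) cnot_bound_Suc[of "card Q - 1"] by (cases "card Q") auto
  finally show ?case
    using stage.hyps(1) by simp
qed

definition z_basis :: "nat \<Rightarrow> pauli" where
  "z_basis j = (0, \<lambda>k. if k = j then 1 else 0)"

lemma diagonal_in_f2_span:
  assumes "finite N" "fst u = 0" "supported_on N u"
  shows "u \<in> f2_span (z_basis ` N)"
proof -
  define J where "J = {j\<in>N. snd u j = 1}"
  have "finite J" "J \<subseteq> N"
    using assms(1) by (auto simp: J_def)
  have "u = (\<Sum>j\<in>J. z_basis j)"
  proof (rule prod_eqI)
    show "fst u = fst (\<Sum>j\<in>J. z_basis j)"
      using assms(2) by (simp add: fst_sum z_basis_def)
    show "snd u = snd (\<Sum>j\<in>J. z_basis j)"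
    proof
      fix k
      have "snd (\<Sum>j\<in>J. z_basis j) k = (if k \<in> J then 1 else 0)"
        using \<open>finite J\<close> by (simp add: snd_sum sum_apply z_basis_def)
      then show "snd u k = snd (\<Sum>j\<in>J. z_basis j) k"
        using assms(3) by (cases "snd u k") (auto simp: J_def supported_on_def)
    qed
  qed
  also have "\<dots> \<in> f2_span (z_basis ` N)"
    using \<open>finite J\<close> \<open>J \<subseteq> N\<close> f2_span_base[of "z_basis ` N"] by (intro f2_span_sum) auto
  finally show ?thesis .
qed

lemma acts_on_mono: "acts_on Q g \<Longrightarrow> Q \<subseteq> N \<Longrightarrow> acts_on N g"
  by (cases g) auto

lemma card_f2_indep_le_support_of_run:
  assumes "qwd_run P C" "finite N" "\<forall>u\<in>P. supported_on N u" "f2_indep T" "T \<subseteq> f2_span P"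
  shows "card T \<le> card N"
  using assms
proof (induction arbitrary: T rule: qwd_run.induct)
  case (stop P)
  have "P \<subseteq> f2_span (z_basis ` N)"
  proof
    fix u assume "u \<in> P"
    then have "fst u = 0"
      using stop.hyps by (auto simp: remaining_def fun_eq_iff)
    then show "u \<in> f2_span (z_basis ` N)"
      using stop.prems(1,2) \<open>u \<in> P\<close> diagonal_in_f2_span by blast
  qed
  then have "T \<subseteq> f2_span (z_basis ` N)"
    using stop.prems(4) f2_span_subset by blast
  then have "card T \<le> card (z_basis ` N)"
    using stop.prems by (intro card_le_if_f2_indep_subset_span) auto
  also have "\<dots> \<le> card N"
    using stop.prems(1) by (rule card_image_le)
  finally show ?case .
next
  case (stage Q P T' vw i C)
  let ?F = "conj_circ (stage_circuit Q vw i)"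
  have "Q \<subseteq> N"
    using stage.hyps(1) stage.prems(2) by (simp add: remaining_subset)
  then have gates: "\<forall>g\<in>set (stage_circuit Q vw i). acts_on N g \<and> proper_gate g"
    using stage_circuit_gates[OF stage.hyps(9)] acts_on_mono by blast
  then have "inj ?F"
    by (simp add: inj_conj_circ)
  have "card (?F ` T) \<le> card N"
  proof (rule stage.IH)
    show "\<forall>u\<in>?F ` P. supported_on N u"
      using stage.prems(2) gates supported_on_conj_circ by blast
    show "f2_indep (?F ` T)"
      using additive_conj_circ \<open>inj ?F\<close> stage.prems(3) by (rule f2_indep_image)
    show "?F ` T \<subseteq> f2_span (?F ` P)"
      using stage.prems(4) additive_image_f2_span[OF additive_conj_circ] by blast
  qed (rule stage.prems(1))
  then show ?case
    using card_image[OF inj_on_subset[OF \<open>inj ?F\<close>]] by simp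
qed

theorem theorem1:
  fixes n r :: nat and P T :: "pauli set" and C :: "gate list"
  assumes on_n: "\<forall>u\<in>P. supported_on {..<n} u"
    and commuting: "\<forall>u\<in>P. \<forall>u'\<in>P. symp n u u' = 0"
    and gens: "indep_gen_set T P" and r_def: "r = card T"
    and run: "qwd_run P C"
  shows "real (cnot_count C) \<le> real n * real r - real r * (real r + 1) / 2"
proof -
  have "remaining P \<subseteq> {..<n}"
    using on_n by (rule remaining_subset)
  have "f2_indep T" "f2_span T = f2_span P"
    using gens by (simp_all add: indep_gen_set_def)
  then have "finite T" "P \<subseteq> f2_span T" "T \<subseteq> f2_span P"
    using f2_span_base by (auto simp: f2_indep_def)
  have "cnot_count C \<le> cnot_bound (card (remaining P)) r"
    using run finite_subset[OF \<open>remaining P \<subseteq> {..<n}\<close>] \<open>finite T\<close> \<open>P \<subseteq> f2_span T\<close>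
    unfolding r_def by (intro cnot_count_le_cnot_bound) simp_all
  also have "\<dots> \<le> cnot_bound n r"
    using card_mono[OF _ \<open>remaining P \<subseteq> {..<n}\<close>] by (intro cnot_bound_mono) simp_all
  finally have "cnot_count C \<le> cnot_bound n r" .
  moreover have "r \<le> n"
    using card_f2_indep_le_support_of_run[OF run _ on_n \<open>f2_indep T\<close> \<open>T \<subseteq> f2_span P\<close>] r_def by simp
  then have "2 * cnot_bound n r + r * (r + 1) = 2 * n * r"
    by (rule cnot_bound_closed_form)
  then have "2 * real (cnot_bound n r) + real r * (real r + 1) = 2 * real n * real r"
    by (metis (mono_tags) of_nat_add of_nat_mult of_nat_1 of_nat_numeral)
  ultimately show ?thesis
    by (simp add: field_simps)
qed

end
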